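(* Let $I\subset\mathbb R$ be a compact interval, $v\in C(I,\mathsf H_1)$, and let $(\alpha_n)$ be real-valued functions in $L^1_{\mathrm{loc}}(\mathbb R)$ with $\alpha_n\rightharpoonup1$ and $|\alpha_n|\le\bar\alpha$ a.e. for some $\bar\alpha\in L^1_{\mathrm{loc}}(\mathbb R)$. Then $$\lim_{n\to\infty}\sup_{t,t'\in I}\big\|\Phi^{A,\alpha_n}(t,t')v(t')-\Phi^A(t-t')v(t')\big\|_{\mathsf H_1}=0.$$
   Context: $\mathsf H_1$ is a complex Hilbert space, $A$ a self-adjoint operator in $\mathsf H_1$, and $\Phi^A(t)=e^{-itA}$ the strongly continuous unitary group it generates. For real-valued $\alpha\in L^1_{\mathrm{loc}}(\mathbb R)$, $\Phi^{A,\alpha}(t_1,t_0)=\Phi^A\big(\int_{t_0}^{t_1}\alpha(s)\,ds\big)$. Weak convergence in $L^1_{\mathrm{loc}}$: $\alpha_n\rightharpoonup\alpha$ means that for every compact interval $J\subset\mathbb R$ and every $\theta\in C(J)$, $\lim_{n\to\infty}\int_J\alpha_n\theta\,dt=\int_J\alpha\theta\,dt$. *)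

theory Defs
  imports "HOL-Analysis.Analysis"
begin

text \<open>A complex Hilbert space: a complex Banach space whose norm satisfies the
  parallelogram law (Jordan--von Neumann), so that it comes from a complex inner product.\<close>
class complex_hilbert = banach +
  fixes scaleC :: "complex \<Rightarrow> 'a \<Rightarrow> 'a"
  assumes scaleC_add_right: "scaleC c (x + y) = scaleC c x + scaleC c y"
    and scaleC_add_left: "scaleC (b + c) x = scaleC b x + scaleC c x"
    and scaleC_scaleC: "scaleC b (scaleC c x) = scaleC (b * c) x"
    and scaleC_one: "scaleC 1 x = x"
    and scaleR_scaleC: "scaleR r x = scaleC (complex_of_real r) x"
    and norm_scaleC: "norm (scaleC c x) = cmod c * norm x"
    and parallelogram: "(norm (x + y))\<^sup>2 + (norm (x - y))\<^sup>2 = 2 * ((norm x)\<^sup>2 + (norm y)\<^sup>2)"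

text \<open>Strongly continuous one-parameter group of unitary operators
  (by Stone's theorem exactly the groups t \<mapsto> exp(-itA), A self-adjoint).\<close>
definition sc_unitary_group :: "(real \<Rightarrow> 'a::complex_hilbert \<Rightarrow> 'a) \<Rightarrow> bool" where
  "sc_unitary_group U \<longleftrightarrow>
     U 0 = id \<and>
     (\<forall>s t. U (s + t) = U s \<circ> U t) \<and>
     (\<forall>t x y. U t (x + y) = U t x + U t y) \<and>
     (\<forall>t c x. U t (scaleC c x) = scaleC c (U t x)) \<and>
     (\<forall>t x. norm (U t x) = norm x) \<and>
     (\<forall>x. continuous_on UNIV (\<lambda>t. U t x))"

definition loc_integrable :: "(real \<Rightarrow> real) \<Rightarrow> bool" where
  "loc_integrable f \<longleftrightarrow> (\<forall>a b. set_integrable lborel {a..b} f)"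

definition weak_L1loc :: "(nat \<Rightarrow> real \<Rightarrow> real) \<Rightarrow> (real \<Rightarrow> real) \<Rightarrow> bool" where
  "weak_L1loc \<alpha>s \<alpha> \<longleftrightarrow>
     (\<forall>a b \<theta>. a \<le> b \<longrightarrow> continuous_on {a..b} \<theta> \<longrightarrow>
        (\<lambda>n. LBINT t:{a..b}. \<alpha>s n t * \<theta> t) \<longlonglongrightarrow> (LBINT t:{a..b}. \<alpha> t * \<theta> t))"

text \<open>\<Phi>^{A,\<alpha>}(t1,t0) = \<Phi>^A(\<integral>_{t0}^{t1} \<alpha>) (oriented integral).\<close>
definition reparam :: "(real \<Rightarrow> 'a \<Rightarrow> 'a) \<Rightarrow> (real \<Rightarrow> real) \<Rightarrow> real \<Rightarrow> real \<Rightarrow> 'a \<Rightarrow> 'a" where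
  "reparam U \<alpha> t1 t0 = U (LBINT s=t0..t1. \<alpha> s)"

end

theory Submission
  imports Defs "HOL-Probability.Probability_Mass_Function"
begin

(* Write F_n(t) = \<integral>_a^t \<alpha>_n.  Then \<Phi>^{A,\<alpha>_n}(t,t') = U(F_n t - F_n t'), and
   by the group law and unitarity
     \<parallel>U(F_n t - F_n t') w - U(t - t') w\<parallel> = \<parallel>U \<delta> w - w\<parallel>,   \<delta> = (F_n t - F_n t') - (t - t').
   So it suffices that
   (1) F_n(t) - (t - a) \<rightarrow> 0 uniformly on [a,b]: pointwise convergence follows from weak
       convergence tested against a continuous cut-off of the indicator of [a,t], whose error
       is controlled by the domination \<bar>\<alpha>_n\<bar> \<le> \<alpha>bar; the family is equicontinuous since
       \<bar>F_n s - F_n t\<bar> \<le> \<bar>\<integral>_t^s \<alpha>bar\<bar>;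
   (2) \<parallel>U \<delta> (v s) - v s\<parallel> \<rightarrow> 0 as \<delta> \<rightarrow> 0 uniformly in s \<in> [a,b] (strong continuity plus
       equicontinuity in s, since U \<delta> is an isometry and v is uniformly continuous).
   Both uniformity statements are instances of one compactness lemma: pointwise convergence
   plus uniform equicontinuity on a compact set gives uniform convergence. *)

section \<open>Uniform convergence from equicontinuity\<close>

lemma uniform_convergence_from_equicontinuity:
  fixes f :: "'b \<Rightarrow> 'c::metric_space \<Rightarrow> real"
  assumes "compact K" "\<forall>x\<in>K. ((\<lambda>n. f n x) \<longlongrightarrow> 0) F"
    "\<forall>e>0. \<exists>d>0. \<forall>n. \<forall>x\<in>K. \<forall>y\<in>K. dist x y < d \<longrightarrow> \<bar>f n x - f n y\<bar> < e"
  shows "\<forall>e>0. eventually (\<lambda>n. \<forall>x\<in>K. \<bar>f n x\<bar> < e) F"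
proof (intro allI impI)
  fix e :: real assume e: "e > 0"
  then obtain d where d: "d > 0" "\<forall>n. \<forall>x\<in>K. \<forall>y\<in>K. dist x y < d \<longrightarrow> \<bar>f n x - f n y\<bar> < e/2"
    using assms(3) by (meson half_gt_zero)
  obtain C where C: "C \<subseteq> K" "finite C" "K \<subseteq> (\<Union>x\<in>C. ball x d)"
    using compactE_image[OF assms(1), of K "\<lambda>x. ball x d"] d(1) by force
  have "\<forall>x\<in>C. eventually (\<lambda>n. \<bar>f n x\<bar> < e/2) F"
  proof
    fix x assume "x \<in> C"
    then have "((\<lambda>n. f n x) \<longlongrightarrow> 0) F" using C(1) assms(2) by auto
    from tendstoD[OF this, of "e/2"] e show "eventually (\<lambda>n. \<bar>f n x\<bar> < e/2) F"
      by (simp add: dist_real_def)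
  qed
  then have "eventually (\<lambda>n. \<forall>x\<in>C. \<bar>f n x\<bar> < e/2) F"
    by (rule eventually_ball_finite[OF C(2)])
  then show "eventually (\<lambda>n. \<forall>x\<in>K. \<bar>f n x\<bar> < e) F"
  proof eventually_elim
    case (elim n)
    show ?case
    proof
      fix y assume y: "y \<in> K"
      then obtain x where x: "x \<in> C" "dist x y < d" using C(3) by auto
      then have "\<bar>f n x - f n y\<bar> < e/2" using d(2) C(1) y by auto
      moreover have "\<bar>f n x\<bar> < e/2" using elim x(1) by blast
      ultimately show "\<bar>f n y\<bar> < e" by linarith
    qed
  qed
qed

lemma SUP_tendsto_zero:
  fixes g :: "nat \<Rightarrow> 'b \<Rightarrow> real"
  assumes "S \<noteq> {}" "\<And>n p. 0 \<le> g n p"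
    and "\<And>e. e > 0 \<Longrightarrow> eventually (\<lambda>n. \<forall>p\<in>S. g n p < e) sequentially"
  shows "(\<lambda>n. SUP p\<in>S. g n p) \<longlonglongrightarrow> 0"
  unfolding tendsto_iff
proof (intro allI impI)
  fix e :: real assume e: "e > 0"
  have "eventually (\<lambda>n. \<forall>p\<in>S. g n p < e/2) sequentially" by (rule assms(3)) (use e in simp)
  then show "eventually (\<lambda>n. dist (SUP p\<in>S. g n p) 0 < e) sequentially"
  proof eventually_elim
    case (elim n)
    then have "(SUP p\<in>S. g n p) \<le> e/2"
      using assms(1) by (intro cSUP_least) (auto intro: less_imp_le)
    moreover have "bdd_above (g n ` S)"
      using elim by (intro bdd_aboveI2[of _ _ "e/2"]) (auto intro: less_imp_le)
    then have "0 \<le> (SUP p\<in>S. g n p)"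
      using assms(1,2) cSUP_upper by (meson ex_in_conv order_trans)
    ultimately show ?case using e by (simp add: dist_real_def)
  qed
qed

section \<open>Integrals of locally integrable functions\<close>

lemma loc_integrable_interval:
  assumes "loc_integrable f"
  shows "interval_lebesgue_integrable lborel (ereal x) (ereal y) f"
proof -
  have "set_integrable lborel {min x y..max x y} f" using assms by (simp add: loc_integrable_def)
  then have "set_integrable lborel {min x y<..<max x y} f"
    by (rule set_integrable_subset) auto
  then show ?thesis unfolding interval_lebesgue_integrable_def
    by (auto simp: min_def max_def split: if_splits)
qed

lemma loc_integrable_sum:
  fixes x y z :: real
  assumes "loc_integrable f"
  shows "(LBINT s=x..y. f s) + (LBINT s=y..z. f s) = (LBINT s=x..z. f s)"
  using loc_integrable_interval[OF assms, of "min x (min y z)" "max x (max y z)"]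
  by (intro interval_integral_sum) simp

lemma loc_integrable_const: "loc_integrable (\<lambda>_. c)"
  unfolding loc_integrable_def by (auto intro!: borel_integrable_atLeastAtMost')

text \<open>Multiplication by a continuous function bounded by one preserves local integrability;
  this makes the cut-off test functions admissible.\<close>
lemma loc_integrable_mult_bounded:
  fixes f \<theta> :: "real \<Rightarrow> real"
  assumes "loc_integrable f" "continuous_on UNIV \<theta>" "\<And>x. \<bar>\<theta> x\<bar> \<le> 1"
  shows "loc_integrable (\<lambda>x. f x * \<theta> x)"
  unfolding loc_integrable_def
proof (intro allI)
  fix x y :: real
  have fi: "set_integrable lborel {x..y} f" using assms(1) by (simp add: loc_integrable_def)
  then have "(\<lambda>z. indicator {x..y} z *\<^sub>R f z) \<in> borel_measurable lborel"
    unfolding set_integrable_def by (rule borel_measurable_integrable)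
  moreover have "\<theta> \<in> borel_measurable lborel"
    using assms(2) by (simp add: borel_measurable_continuous_onI)
  ultimately have "(\<lambda>z. (indicator {x..y} z *\<^sub>R f z) * \<theta> z) \<in> borel_measurable lborel"
    by measurable
  then have "set_borel_measurable lborel {x..y} (\<lambda>z. f z * \<theta> z)"
    unfolding set_borel_measurable_def by (simp add: mult.assoc)
  moreover have "AE z in lborel. z \<in> {x..y} \<longrightarrow> norm (f z * \<theta> z) \<le> norm (f z)"
    using assms(3) by (auto simp: abs_mult intro!: mult_left_le)
  ultimately show "set_integrable lborel {x..y} (\<lambda>z. f z * \<theta> z)"
    by (rule set_integrable_bound[OF fi])
qed

lemma interval_integral_abs_le:
  fixes f g :: "real \<Rightarrow> real"
  assumes "t \<le> s" "set_integrable lborel {t..s} f" "set_integrable lborel {t..s} g"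
    "AE x in lborel. \<bar>f x\<bar> \<le> g x"
  shows "\<bar>LBINT x=t..s. f x\<bar> \<le> (LBINT x=t..s. g x)"
proof -
  have "\<bar>LBINT x:{t..s}. f x\<bar> \<le> (LBINT x:{t..s}. \<bar>f x\<bar>)"
    using set_integral_norm_bound[OF assms(2)] by simp
  also have "\<dots> \<le> (LBINT x:{t..s}. g x)"
    by (rule set_integral_mono_AE) (use assms set_integrable_abs in auto)
  finally show ?thesis using assms(1) by (simp add: interval_integral_Icc)
qed

text \<open>Equicontinuity of primitives: the increments of \<integral>_a^\<cdot> f are dominated by those of
  \<integral>_a^\<cdot> g whenever \<bar>f\<bar> \<le> g.\<close>
lemma primitive_increment_bound:
  fixes f g :: "real \<Rightarrow> real" and a s t :: real
  assumes f: "loc_integrable f" and g: "loc_integrable g"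
    and fg: "AE x in lborel. \<bar>f x\<bar> \<le> g x"
  shows "\<bar>(LBINT x=a..s. f x) - (LBINT x=a..t. f x)\<bar>
           \<le> \<bar>(LBINT x=a..s. g x) - (LBINT x=a..t. g x)\<bar>"
proof -
  have bound: "\<bar>LBINT x=t..s. f x\<bar> \<le> (LBINT x=t..s. g x)" if "t \<le> s" for t s :: real
    by (rule interval_integral_abs_le[OF that _ _ fg]) (use f g in \<open>auto simp: loc_integrable_def\<close>)
  show ?thesis
    using loc_integrable_sum[OF f, of a t s] loc_integrable_sum[OF g, of a t s]
      loc_integrable_sum[OF f, of a s t] loc_integrable_sum[OF g, of a s t]
      bound[of t s] bound[of s t] by (cases "t \<le> s") linarith+
qed

text \<open>Replacing the indicator of [a,t] by the piecewise linear cut-off \<theta> (equal to 1 up to t,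
  vanishing after t+\<eta>) changes the integral of f by at most \<integral>_t^{t+\<eta>} g, where \<bar>f\<bar> \<le> g.\<close>
lemma cutoff_bound:
  fixes f g :: "real \<Rightarrow> real" and a t c \<eta> :: real
  assumes f: "loc_integrable f" and g: "loc_integrable g"
    and fg: "AE x in lborel. \<bar>f x\<bar> \<le> g x"
    and at: "a \<le> t" and eta: "0 < \<eta>" and tc: "t + \<eta> \<le> c"
  shows "\<bar>(LBINT x=a..c. f x * max 0 (min 1 ((t + \<eta> - x)/\<eta>))) - (LBINT x=a..t. f x)\<bar>
          \<le> (LBINT x=t..t+\<eta>. g x)"
proof -
  define \<theta> where "\<theta> = (\<lambda>x::real. max 0 (min 1 ((t + \<eta> - x)/\<eta>)))"
  have thc: "continuous_on UNIV \<theta>" unfolding \<theta>_def by (intro continuous_intros) (use eta in auto)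
  have thb: "\<bar>\<theta> x\<bar> \<le> 1" for x unfolding \<theta>_def by auto
  have fth: "loc_integrable (\<lambda>x. f x * \<theta> x)" by (rule loc_integrable_mult_bounded[OF f thc thb])
  have left: "(LBINT x=a..t. f x * \<theta> x) = (LBINT x=a..t. f x)"
  proof (rule interval_integral_cong)
    fix x assume "x \<in> einterval (min (ereal a) (ereal t)) (max (ereal a) (ereal t))"
    then have "x < t" using at by (auto simp: einterval_iff min_def max_def split: if_splits)
    then show "f x * \<theta> x = f x" using eta unfolding \<theta>_def by (simp add: field_simps)
  qed
  have right: "(LBINT x=t+\<eta>..c. f x * \<theta> x) = (LBINT x=t+\<eta>..c. 0)"
  proof (rule interval_integral_cong)
    fix x assume "x \<in> einterval (min (ereal (t+\<eta>)) (ereal c)) (max (ereal (t+\<eta>)) (ereal c))"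
    then have "x > t + \<eta>" using tc by (auto simp: einterval_iff min_def max_def split: if_splits)
    then have "(t + \<eta> - x)/\<eta> \<le> 0" using eta by (simp add: divide_nonpos_pos)
    then show "f x * \<theta> x = 0" unfolding \<theta>_def by simp
  qed
  have middle: "\<bar>LBINT x=t..t+\<eta>. f x * \<theta> x\<bar> \<le> (LBINT x=t..t+\<eta>. g x)"
  proof (rule interval_integral_abs_le)
    show "AE x in lborel. \<bar>f x * \<theta> x\<bar> \<le> g x"
      using fg by eventually_elim (use thb in \<open>auto simp: abs_mult intro: order_trans[OF mult_left_le]\<close>)
  qed (use eta fth g in \<open>auto simp: loc_integrable_def\<close>)
  show ?thesis
    using loc_integrable_sum[OF fth, of a t c] loc_integrable_sum[OF fth, of t "t+\<eta>" c]
      left right middle unfolding \<theta>_def by simp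
qed

section \<open>Convergence of the primitives\<close>

text \<open>Test against the cut-off of width \<eta>, where \<eta> is so
  small that both the dominated error and the error for the constant 1 are small.\<close>
lemma primitive_tendsto:
  fixes \<alpha>s :: "nat \<Rightarrow> real \<Rightarrow> real"
  assumes li: "\<And>n. loc_integrable (\<alpha>s n)"
    and weak: "weak_L1loc \<alpha>s (\<lambda>_. 1)"
    and lib: "loc_integrable \<alpha>bar"
    and dom: "\<And>n. AE t in lborel. \<bar>\<alpha>s n t\<bar> \<le> \<alpha>bar t"
    and at: "a \<le> t"
  shows "(\<lambda>n. LBINT s=a..t. \<alpha>s n s) \<longlonglongrightarrow> t - a"
  unfolding tendsto_iff
proof (intro allI impI)
  fix \<epsilon> :: real assume e: "\<epsilon> > 0"
  define H where "H = (\<lambda>x. LBINT s:{t..x}. \<alpha>bar s)"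
  have "continuous_on UNIV H" unfolding H_def
    by (rule continuous_on_LBINT) (use lib in \<open>simp add: loc_integrable_def\<close>)
  then have "isCont H t" by (simp add: continuous_on_eq_continuous_at)
  then obtain d where d: "d > 0" "\<And>y. dist y t < d \<Longrightarrow> dist (H y) (H t) < \<epsilon>/3"
    unfolding continuous_at_eps_delta using e by (meson divide_pos_pos zero_less_numeral)
  define \<eta> where "\<eta> = min (d/2) (\<epsilon>/4)"
  have eta: "\<eta> > 0" "\<eta> < d" "\<eta> \<le> \<epsilon>/4" using d e unfolding \<eta>_def by auto
  define c where "c = t + \<eta>"
  define \<theta> where "\<theta> = (\<lambda>x::real. max 0 (min 1 ((t + \<eta> - x)/\<eta>)))"
  have ac: "a \<le> c" using at eta unfolding c_def by simp
  have "continuous_on {a..c} \<theta>" unfolding \<theta>_def by (intro continuous_intros) (use eta in auto)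
  then have "(\<lambda>n. LBINT s:{a..c}. \<alpha>s n s * \<theta> s) \<longlonglongrightarrow> (LBINT s:{a..c}. 1 * \<theta> s)"
    using weak ac unfolding weak_L1loc_def by blast
  then have conv: "(\<lambda>n. LBINT s=a..c. \<alpha>s n s * \<theta> s) \<longlonglongrightarrow> (LBINT s=a..c. 1 * \<theta> s)"
    using ac by (simp add: interval_integral_Icc)
  have "H t = 0"
    unfolding H_def using interval_integral_Icc[of t t \<alpha>bar] by simp
  moreover have "(LBINT s=t..t+\<eta>. \<alpha>bar s) = H (t+\<eta>)"
    unfolding H_def using eta by (simp add: interval_integral_Icc)
  ultimately have "\<bar>LBINT s=t..t+\<eta>. \<alpha>bar s\<bar> < \<epsilon>/3" using d(2)[of "t+\<eta>"] eta by (simp add: dist_real_def)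
  then have err_n: "\<bar>(LBINT s=a..c. \<alpha>s n s * \<theta> s) - (LBINT s=a..t. \<alpha>s n s)\<bar> < \<epsilon>/3" for n
    using cutoff_bound[OF li lib dom at eta(1), of c n] unfolding \<theta>_def c_def by linarith
  have err_1: "\<bar>(LBINT s=a..c. 1 * \<theta> s) - (t - a)\<bar> \<le> \<epsilon>/4"
    using cutoff_bound[where f="\<lambda>_. 1" and g="\<lambda>_. 1" and c=c,
          OF loc_integrable_const loc_integrable_const _ at eta(1)] eta at
    unfolding \<theta>_def c_def by simp
  have "0 < \<epsilon>/3" using e by simp
  show "eventually (\<lambda>n. dist (LBINT s=a..t. \<alpha>s n s) (t - a) < \<epsilon>) sequentially"
    using tendstoD[OF conv \<open>0 < \<epsilon>/3\<close>]
  proof eventually_elim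
    case (elim n)
    then have "\<bar>(LBINT s=a..c. \<alpha>s n s * \<theta> s) - (LBINT s=a..c. 1 * \<theta> s)\<bar> < \<epsilon>/3"
      by (simp add: dist_real_def)
    with err_n[of n] err_1 e show ?case unfolding dist_real_def by linarith
  qed
qed

lemma primitive_increment_uniform:
  fixes \<alpha>s :: "nat \<Rightarrow> real \<Rightarrow> real"
  assumes li: "\<And>n. loc_integrable (\<alpha>s n)"
    and weak: "weak_L1loc \<alpha>s (\<lambda>_. 1)"
    and lib: "loc_integrable \<alpha>bar"
    and dom: "\<And>n. AE t in lborel. \<bar>\<alpha>s n t\<bar> \<le> \<alpha>bar t"
    and e: "e > 0"
  shows "eventually (\<lambda>n. \<forall>t\<in>{a..b}. \<forall>t'\<in>{a..b}. \<bar>(LBINT s=t'..t. \<alpha>s n s) - (t - t')\<bar> < e)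
           sequentially"
proof -
  define H where "H = (\<lambda>x::real. LBINT s=a..x. \<alpha>bar s)"
  define f where "f = (\<lambda>n t. (LBINT s=a..t. \<alpha>s n s) - (t - a))"
  have "continuous_on UNIV (\<lambda>x. LBINT s:{a..x}. \<alpha>bar s)"
    by (rule continuous_on_LBINT) (use lib in \<open>simp add: loc_integrable_def\<close>)
  then have "continuous_on {a..b} H"
    by (rule continuous_on_subset[THEN continuous_on_eq]) (auto simp: H_def interval_integral_Icc)
  then have Huc: "uniformly_continuous_on {a..b} H"
    by (rule compact_uniformly_continuous) simp
  have "\<forall>e>0. eventually (\<lambda>n. \<forall>x\<in>{a..b}. \<bar>f n x\<bar> < e) sequentially"
  proof (rule uniform_convergence_from_equicontinuity)
    show "\<forall>x\<in>{a..b}. ((\<lambda>n. f n x) \<longlongrightarrow> 0) sequentially"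
      using primitive_tendsto[OF li weak lib dom] unfolding f_def
      by (auto intro: Lim_null[THEN iffD1])
    show "\<forall>e>0. \<exists>d>0. \<forall>n. \<forall>x\<in>{a..b}. \<forall>y\<in>{a..b}. dist x y < d \<longrightarrow> \<bar>f n x - f n y\<bar> < e"
    proof (intro allI impI)
      fix e :: real assume e: "e > 0"
      then obtain d where d: "d > 0"
        "\<forall>x\<in>{a..b}. \<forall>y\<in>{a..b}. dist y x < d \<longrightarrow> dist (H y) (H x) < e/2"
        using Huc unfolding uniformly_continuous_on_def by (meson half_gt_zero)
      show "\<exists>d>0. \<forall>n. \<forall>x\<in>{a..b}. \<forall>y\<in>{a..b}. dist x y < d \<longrightarrow> \<bar>f n x - f n y\<bar> < e"
      proof (intro exI[of _ "min d (e/2)"] conjI allI ballI impI)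
        fix n x y assume xy: "x \<in> {a..b}" "y \<in> {a..b}" "dist x y < min d (e/2)"
        then have "\<bar>H x - H y\<bar> < e/2" "\<bar>x - y\<bar> < e/2" using d(2) by (auto simp: dist_real_def)
        then show "\<bar>f n x - f n y\<bar> < e"
          using primitive_increment_bound[OF li[of n] lib dom[of n], of a x y] unfolding f_def H_def by linarith
      qed (use d e in simp)
    qed
  qed simp
  then have "eventually (\<lambda>n. \<forall>x\<in>{a..b}. \<bar>f n x\<bar> < e/2) sequentially" using e half_gt_zero by blast
  then show ?thesis
  proof eventually_elim
    case (elim n)
    show ?case
    proof (intro ballI)
      fix t t' assume "t \<in> {a..b}" "t' \<in> {a..b}"
      then have "\<bar>f n t\<bar> < e/2" "\<bar>f n t'\<bar> < e/2" using elim by auto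
      moreover have "(LBINT s=t'..t. \<alpha>s n s) - (t - t') = f n t - f n t'"
        using loc_integrable_sum[OF li[of n], of a t' t] unfolding f_def by simp
      ultimately show "\<bar>(LBINT s=t'..t. \<alpha>s n s) - (t - t')\<bar> < e" by linarith
    qed
  qed
qed

section \<open>Strongly continuous unitary groups\<close>

lemma unitary_group_diff:
  assumes "sc_unitary_group U"
  shows "U t (x - y) = U t x - U t y"
proof -
  have "U t ((x - y) + y) = U t (x - y) + U t y"
    using assms unfolding sc_unitary_group_def by blast
  then show ?thesis by (simp add: algebra_simps)
qed

lemma unitary_group_dist:
  assumes U: "sc_unitary_group U"
  shows "norm (U x w - U y w) = norm (U (x - y) w - w)"
proof -
  have "U (y + (x - y)) = U y \<circ> U (x - y)" using U unfolding sc_unitary_group_def by blast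
  then have "U x w - U y w = U y (U (x - y) w - w)" using unitary_group_diff[OF U] by simp
  then show ?thesis using U unfolding sc_unitary_group_def by simp
qed

lemma unitary_group_uniformly_continuous:
  fixes a b :: real
  assumes U: "sc_unitary_group U" and v: "continuous_on {a..b} v" and e: "e > 0"
  shows "\<exists>d>0. \<forall>\<delta>. \<bar>\<delta>\<bar> < d \<longrightarrow> (\<forall>s\<in>{a..b}. norm (U \<delta> (v s) - v s) < e)"
proof -
  define \<phi> where "\<phi> = (\<lambda>\<delta> s. norm (U \<delta> (v s) - v s))"
  have U0: "U 0 = id" and iso: "\<And>t x. norm (U t x) = norm x"
    using U unfolding sc_unitary_group_def by auto
  have vuc: "uniformly_continuous_on {a..b} v"
    using v by (intro compact_uniformly_continuous) auto
  have "\<forall>e>0. eventually (\<lambda>\<delta>. \<forall>s\<in>{a..b}. \<bar>\<phi> \<delta> s\<bar> < e) (at 0)"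
  proof (rule uniform_convergence_from_equicontinuity)
    show "\<forall>s\<in>{a..b}. ((\<lambda>\<delta>. \<phi> \<delta> s) \<longlongrightarrow> 0) (at 0)"
    proof
      fix s
      have "continuous_on UNIV (\<lambda>t. U t (v s))" using U unfolding sc_unitary_group_def by blast
      then have "((\<lambda>t. U t (v s)) \<longlongrightarrow> U 0 (v s)) (at 0)"
        by (simp add: continuous_on_eq_continuous_at isCont_def)
      then have "((\<lambda>t. norm (U t (v s) - v s)) \<longlongrightarrow> norm (U 0 (v s) - v s)) (at 0)"
        by (intro tendsto_intros)
      then show "((\<lambda>\<delta>. \<phi> \<delta> s) \<longlongrightarrow> 0) (at 0)" using U0 unfolding \<phi>_def by simp
    qed
    show "\<forall>e>0. \<exists>d>0. \<forall>\<delta>. \<forall>x\<in>{a..b}. \<forall>y\<in>{a..b}. dist x y < d \<longrightarrow> \<bar>\<phi> \<delta> x - \<phi> \<delta> y\<bar> < e"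
    proof (intro allI impI)
      fix e :: real assume e: "e > 0"
      then obtain d where d: "d > 0"
        "\<forall>x\<in>{a..b}. \<forall>y\<in>{a..b}. dist y x < d \<longrightarrow> dist (v y) (v x) < e/2"
        using vuc unfolding uniformly_continuous_on_def by (meson half_gt_zero)
      show "\<exists>d>0. \<forall>\<delta>. \<forall>x\<in>{a..b}. \<forall>y\<in>{a..b}. dist x y < d \<longrightarrow> \<bar>\<phi> \<delta> x - \<phi> \<delta> y\<bar> < e"
      proof (intro exI[of _ d] conjI allI ballI impI)
        fix \<delta> x y assume xy: "x \<in> {a..b}" "y \<in> {a..b}" "dist x y < d"
        then have vv: "norm (v x - v y) < e/2" using d(2) by (auto simp: dist_norm)
        have "\<bar>\<phi> \<delta> x - \<phi> \<delta> y\<bar> \<le> norm ((U \<delta> (v x) - U \<delta> (v y)) - (v x - v y))"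
          unfolding \<phi>_def by (rule order_trans[OF norm_triangle_ineq3]) (simp add: algebra_simps)
        also have "\<dots> \<le> norm (U \<delta> (v x - v y)) + norm (v x - v y)"
          unfolding unitary_group_diff[OF U] by (rule norm_triangle_ineq4)
        finally show "\<bar>\<phi> \<delta> x - \<phi> \<delta> y\<bar> < e" using vv iso by simp
      qed (use d in simp)
    qed
  qed simp
  then obtain d where d: "d > 0" "\<And>\<delta>. \<delta> \<noteq> 0 \<Longrightarrow> \<bar>\<delta>\<bar> < d \<Longrightarrow> \<forall>s\<in>{a..b}. \<bar>\<phi> \<delta> s\<bar> < e"
    using e unfolding eventually_at by (auto simp: dist_real_def)
  have "\<phi> 0 s = 0" for s using U0 unfolding \<phi>_def by simp
  then show ?thesis using d e unfolding \<phi>_def by (metis abs_norm_cancel)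
qed

theorem corollary2p5:
  fixes U :: "real \<Rightarrow> 'a::complex_hilbert \<Rightarrow> 'a"
    and v :: "real \<Rightarrow> 'a"
    and \<alpha>s :: "nat \<Rightarrow> real \<Rightarrow> real"
    and \<alpha>bar :: "real \<Rightarrow> real"
    and a b :: real
  assumes "sc_unitary_group U"
    and "a \<le> b"
    and "continuous_on {a..b} v"
    and "\<And>n. loc_integrable (\<alpha>s n)"
    and "weak_L1loc \<alpha>s (\<lambda>_. 1)"
    and "loc_integrable \<alpha>bar"
    and "\<And>n. AE t in lborel. \<bar>\<alpha>s n t\<bar> \<le> \<alpha>bar t"
  shows "(\<lambda>n. SUP p\<in>{a..b} \<times> {a..b}.
            norm (reparam U (\<alpha>s n) (fst p) (snd p) (v (snd p)) - U (fst p - snd p) (v (snd p))))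
         \<longlonglongrightarrow> 0"
proof (rule SUP_tendsto_zero)
  show "{a..b} \<times> {a..b} \<noteq> {}" using assms(2) by simp
  fix e :: real assume "e > 0"
  then obtain d where d: "d > 0" "\<And>\<delta> s. \<bar>\<delta>\<bar> < d \<Longrightarrow> s \<in> {a..b} \<Longrightarrow> norm (U \<delta> (v s) - v s) < e"
    using unitary_group_uniformly_continuous[OF assms(1,3)] by blast
  show "eventually (\<lambda>n. \<forall>p\<in>{a..b} \<times> {a..b}.
          norm (reparam U (\<alpha>s n) (fst p) (snd p) (v (snd p)) - U (fst p - snd p) (v (snd p))) < e)
        sequentially"
    using primitive_increment_uniform[OF assms(4-7) d(1), of a b]
  proof eventually_elim
    case (elim n)
    show ?case
    proof
      fix p assume "p \<in> {a..b} \<times> {a..b}"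
      then obtain t t' where p: "p = (t, t')" and tt: "t \<in> {a..b}" "t' \<in> {a..b}" by auto
      have "norm (reparam U (\<alpha>s n) t t' (v t') - U (t - t') (v t'))
            = norm (U ((LBINT s=t'..t. \<alpha>s n s) - (t - t')) (v t') - v t')"
        unfolding reparam_def by (rule unitary_group_dist[OF assms(1)])
      also have "\<dots> < e" using d(2) elim tt by blast
      finally show "norm (reparam U (\<alpha>s n) (fst p) (snd p) (v (snd p))
                     - U (fst p - snd p) (v (snd p))) < e" by (simp add: p)
    qed
  qed
qed simp

end
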